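(* Let $X$ be a nonempty set and $d$ a triangular symmetric on $X$ such that $(X,d)$ is 0-complete. Let $T:X\to X$, $G\in\{M_1,M_2\}$, and suppose $d(Tx,Ty)\le\varphi(G(x,y))$ for all $x,y\in X$, for some asymptotic normal function $\varphi:[0,\infty)\to[0,\infty)$. Then $T$ is $d$-asymptotic, i.e. $\lim_n d(T^nx,T^{n+1}x)=0$ for every $x\in X$.
   Context: A symmetric on $X$ is a map $d:X\times X\to[0,\infty)$ with $d(x,y)=d(y,x)$; it is triangular if $d(x,z)\le d(x,y)+d(y,z)$ for all $x,y,z$. A sequence $(x_n)$ $0d$-converges to $x$ if $d(x_n,x)\to0$; it is $0d$-Cauchy if for every $\varepsilon>0$ there is $j$ with $d(x_m,x_n)<\varepsilon$ whenever $j\le m<n$; $(X,d)$ is 0-complete if every $0d$-Cauchy sequence $0d$-converges to some point. Notation: $M_1(x,y)=d(x,y)$, $H(x,y)=\max\{d(x,Tx),d(y,Ty)\}$, $M_2=\max\{M_1,H\}$. $\varphi$ is normal if $\varphi(0)=0$ and $\varphi(t)<t$ for $t>0$; asymptotic normal if normal and every sequence $(r_n)$ in $[0,\infty)$ with $r_{n+1}\le\varphi(r_n)$ for all $n$ tends to $0$. *)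

theory Defs
  imports "HOL-Analysis.Analysis"
begin

definition symmetric_on :: "'a set \<Rightarrow> ('a \<Rightarrow> 'a \<Rightarrow> real) \<Rightarrow> bool" where
  "symmetric_on X d \<longleftrightarrow> (\<forall>x\<in>X. \<forall>y\<in>X. d x y \<ge> 0 \<and> d x y = d y x)"

definition triangular_on :: "'a set \<Rightarrow> ('a \<Rightarrow> 'a \<Rightarrow> real) \<Rightarrow> bool" where
  "triangular_on X d \<longleftrightarrow> (\<forall>x\<in>X. \<forall>y\<in>X. \<forall>z\<in>X. d x z \<le> d x y + d y z)"

definition zero_d_converges :: "('a \<Rightarrow> 'a \<Rightarrow> real) \<Rightarrow> (nat \<Rightarrow> 'a) \<Rightarrow> 'a \<Rightarrow> bool" where
  "zero_d_converges d s x \<longleftrightarrow> (\<lambda>n. d (s n) x) \<longlonglongrightarrow> 0"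

definition zero_d_Cauchy :: "('a \<Rightarrow> 'a \<Rightarrow> real) \<Rightarrow> (nat \<Rightarrow> 'a) \<Rightarrow> bool" where
  "zero_d_Cauchy d s \<longleftrightarrow> (\<forall>\<epsilon>>0. \<exists>j. \<forall>m n. j \<le> m \<and> m < n \<longrightarrow> d (s m) (s n) < \<epsilon>)"

definition zero_complete :: "'a set \<Rightarrow> ('a \<Rightarrow> 'a \<Rightarrow> real) \<Rightarrow> bool" where
  "zero_complete X d \<longleftrightarrow> (\<forall>s. (\<forall>n. s n \<in> X) \<and> zero_d_Cauchy d s \<longrightarrow> (\<exists>x\<in>X. zero_d_converges d s x))"

definition M1 :: "('a \<Rightarrow> 'a \<Rightarrow> real) \<Rightarrow> ('a \<Rightarrow> 'a) \<Rightarrow> 'a \<Rightarrow> 'a \<Rightarrow> real" where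
  "M1 d T x y = d x y"

definition H :: "('a \<Rightarrow> 'a \<Rightarrow> real) \<Rightarrow> ('a \<Rightarrow> 'a) \<Rightarrow> 'a \<Rightarrow> 'a \<Rightarrow> real" where
  "H d T x y = max (d x (T x)) (d y (T y))"

definition M2 :: "('a \<Rightarrow> 'a \<Rightarrow> real) \<Rightarrow> ('a \<Rightarrow> 'a) \<Rightarrow> 'a \<Rightarrow> 'a \<Rightarrow> real" where
  "M2 d T x y = max (M1 d T x y) (H d T x y)"

definition normal_fun :: "(real \<Rightarrow> real) \<Rightarrow> bool" where
  "normal_fun \<phi> \<longleftrightarrow> \<phi> 0 = 0 \<and> (\<forall>t>0. \<phi> t < t)"

definition asymptotic_normal :: "(real \<Rightarrow> real) \<Rightarrow> bool" where
  "asymptotic_normal \<phi> \<longleftrightarrow> normal_fun \<phi> \<and>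
     (\<forall>r::nat \<Rightarrow> real. (\<forall>n. r n \<ge> 0) \<and> (\<forall>n. r (Suc n) \<le> \<phi> (r n)) \<longrightarrow> r \<longlonglongrightarrow> 0)"

definition d_asymptotic :: "'a set \<Rightarrow> ('a \<Rightarrow> 'a \<Rightarrow> real) \<Rightarrow> ('a \<Rightarrow> 'a) \<Rightarrow> bool" where
  "d_asymptotic X d T \<longleftrightarrow> (\<forall>x\<in>X. (\<lambda>n. d ((T ^^ n) x) ((T ^^ Suc n) x)) \<longlonglongrightarrow> 0)"

end

theory Submission
  imports Defs
begin

text \<open>Along an orbit put \<open>r n = d (T\<^sup>n x) (T\<^sup>n\<^sup>+\<^sup>1 x)\<close>. For \<open>G = M2\<close> one has
  \<open>G d T (T\<^sup>n x) (T\<^sup>n\<^sup>+\<^sup>1 x) = max (r n) (r (n+1))\<close>, and \<open>r (n+1) \<le> \<phi> (r (n+1)) < r (n+1)\<close> is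
  impossible for \<open>r (n+1) > 0\<close>, so in both cases \<open>r (n+1) \<le> \<phi> (r n)\<close>; asymptotic normality of
  \<open>\<phi>\<close> then forces \<open>r n \<longlonglongrightarrow> 0\<close>.\<close>

lemma normal_fun_bound_max:
  assumes "normal_fun \<phi>" and "0 \<le> a" and "b \<le> \<phi> (max a b)"
  shows "b \<le> \<phi> a"
proof (cases "b \<le> a")
  case True
  then show ?thesis using assms(3) by (simp add: max_def)
next
  case False
  then have "\<phi> b < b" using assms(1,2) by (simp add: normal_fun_def)
  then show ?thesis using False assms(3) by (simp add: max_def)
qed

lemma orbit_step_bound:
  assumes "normal_fun \<phi>" and "G \<in> {M1, M2}" and "0 \<le> d x (T x)"
    and "d (T x) (T (T x)) \<le> \<phi> (G d T x (T x))"
  shows "d (T x) (T (T x)) \<le> \<phi> (d x (T x))"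
proof (cases "G = M1")
  case True
  then show ?thesis using assms(4) by (simp add: M1_def)
next
  case False
  then have "G d T x (T x) = max (d x (T x)) (d (T x) (T (T x)))"
    using assms(2) by (auto simp: M2_def M1_def H_def)
  then show ?thesis using normal_fun_bound_max[OF assms(1,3)] assms(4) by simp
qed

lemma funpow_in_invariant_set:
  assumes "\<forall>x\<in>X. T x \<in> X" and "x \<in> X"
  shows "(T ^^ n) x \<in> X"
  using assms by (induction n) auto

theorem lemma5:
  fixes X :: "'a set" and d :: "'a \<Rightarrow> 'a \<Rightarrow> real" and T :: "'a \<Rightarrow> 'a"
    and G :: "('a \<Rightarrow> 'a \<Rightarrow> real) \<Rightarrow> ('a \<Rightarrow> 'a) \<Rightarrow> 'a \<Rightarrow> 'a \<Rightarrow> real"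
    and \<phi> :: "real \<Rightarrow> real"
  assumes "X \<noteq> {}"
    and "symmetric_on X d" and "triangular_on X d" and "zero_complete X d"
    and "\<forall>x\<in>X. T x \<in> X"
    and "G \<in> {M1, M2}"
    and "\<forall>t\<ge>0. \<phi> t \<ge> 0"
    and "asymptotic_normal \<phi>"
    and "\<forall>x\<in>X. \<forall>y\<in>X. d (T x) (T y) \<le> \<phi> (G d T x y)"
  shows "d_asymptotic X d T"
  unfolding d_asymptotic_def
proof
  fix x assume "x \<in> X"
  define r where "r n = d ((T ^^ n) x) ((T ^^ Suc n) x)" for n
  have orbit: "(T ^^ n) x \<in> X" for n
    using funpow_in_invariant_set[OF assms(5) \<open>x \<in> X\<close>] .
  have nonneg: "0 \<le> r n" for n
    using assms(2) orbit unfolding symmetric_on_def r_def by blast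
  have "r (Suc n) \<le> \<phi> (r n)" for n
    using orbit_step_bound[of \<phi> G d "(T ^^ n) x" T] assms(5,6,8,9) orbit[of n] nonneg[of n]
    by (simp add: r_def asymptotic_normal_def)
  then show "r \<longlonglongrightarrow> 0"
    using nonneg assms(8) unfolding asymptotic_normal_def by blast
qed

end
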